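(* The binary (i.e., $2$-ary) unbiased black-box complexity of the $\mathrm{DLB}$ problem is $O(n\log n)$.
   Context: Let $n$ be an even positive integer. For $x\in\{0,1\}^n$ consider the blocks $(x_{2\ell+1},x_{2\ell+2})$, $\ell=0,\dots,\frac n2-1$. If $x\neq(1,\dots,1)$, let $m$ be the smallest $\ell$ with $x_{2\ell+1}\neq 1$ or $x_{2\ell+2}\neq 1$, and define $\mathrm{DLB}(x)=2m+1$ if $x_{2m+1}+x_{2m+2}=0$ and $\mathrm{DLB}(x)=2m$ if $x_{2m+1}+x_{2m+2}=1$; set $\mathrm{DLB}(1,\dots,1)=n$. The $\mathrm{DLB}$ problem is to maximize $\mathrm{DLB}$. A $k$-ary variation operator $V$ assigns to each $k$-tuple $(x^1,\dots,x^k)$ of bit strings a probability distribution on $\{0,1\}^n$; it is unbiased if for all $x^1,\dots,x^k,y,z\in\{0,1\}^n$, $\Pr[y=V(x^1,\dots,x^k)]=\Pr[y\oplus z=V(x^1\oplus z,\dots,x^k\oplus z)]$, and for all permutations $\sigma$ of $[1..n]$, $\Pr[y=V(x^1,\dots,x^k)]=\Pr[\sigma(y)=V(\sigma(x^1),\dots,\sigma(x^k))]$, where $\sigma(x)=(x_{\sigma(1)},\dots,x_{\sigma(n)})$. A $k$-ary unbiased black-box algorithm generates $x^{(0)}$ uniformly at random; for $t=1,2,\dots$, based solely on $(f(x^{(0)}),\dots,f(x^{(t-1)}))$, it chooses a $k$-ary unbiased variation operator $V$ and indices $i_1,\dots,i_k\in[0..t-1]$ and samples $x^{(t)}\sim V(x^{(i_1)},\dots,x^{(i_k)})$;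 each search point is evaluated when generated. The runtime is the number of fitness evaluations until (and including) the first evaluation of an optimum. The $k$-ary unbiased black-box complexity of $\mathrm{DLB}$ is the infimum over all $k$-ary unbiased black-box algorithms of the expected runtime on $\mathrm{DLB}$. *)

theory Defs
  imports "HOL-Probability.Probability_Mass_Function" "HOL-Combinatorics.Permutations"
begin

text \<open>Bit strings of length n are bool lists of length n; True = 1, False = 0.
  Position i (1-based in the paper) is list index i-1.\<close>

definition bitstrings :: "nat \<Rightarrow> bool list set" where
  "bitstrings n = {x. length x = n}"

definition DLB :: "nat \<Rightarrow> bool list \<Rightarrow> nat" where
  "DLB n x =
     (if x = replicate n True then n
      else (let m = (LEAST l. \<not> (x ! (2*l) \<and> x ! (2*l+1))) in
            if \<not> x ! (2*m) \<and> \<not> x ! (2*m+1) then 2*m+1 else 2*m))"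

definition xor_bits :: "bool list \<Rightarrow> bool list \<Rightarrow> bool list" where
  "xor_bits x z = map2 (\<noteq>) x z"

definition perm_bits :: "nat \<Rightarrow> (nat \<Rightarrow> nat) \<Rightarrow> bool list \<Rightarrow> bool list" where
  "perm_bits n \<sigma> x = map (\<lambda>i. x ! \<sigma> i) [0..<n]"

definition unbiased_op :: "nat \<Rightarrow> nat \<Rightarrow> (bool list list \<Rightarrow> bool list pmf) \<Rightarrow> bool" where
  "unbiased_op n k V \<longleftrightarrow>
     (\<forall>xs. length xs = k \<and> set xs \<subseteq> bitstrings n \<longrightarrow> set_pmf (V xs) \<subseteq> bitstrings n) \<and>
     (\<forall>xs y z. length xs = k \<and> set xs \<subseteq> bitstrings n \<and> y \<in> bitstrings n \<and> z \<in> bitstrings n \<longrightarrow>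
        pmf (V xs) y = pmf (V (map (\<lambda>x. xor_bits x z) xs)) (xor_bits y z)) \<and>
     (\<forall>xs y \<sigma>. length xs = k \<and> set xs \<subseteq> bitstrings n \<and> y \<in> bitstrings n \<and> \<sigma> permutes {..<n} \<longrightarrow>
        pmf (V xs) y = pmf (V (map (perm_bits n \<sigma>) xs)) (perm_bits n \<sigma> y))"

text \<open>A k-ary unbiased black-box algorithm (for length n): given the fitness history
  (f(x^(0)),...,f(x^(t-1))), t >= 1, it chooses an unbiased k-ary operator V and
  indices i_1..i_k in [0..t-1].\<close>
type_synonym algorithm = "nat list \<Rightarrow> (bool list list \<Rightarrow> bool list pmf) \<times> nat list"

definition valid_alg :: "nat \<Rightarrow> nat \<Rightarrow> algorithm \<Rightarrow> bool" where
  "valid_alg n k A \<longleftrightarrow>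
     (\<forall>h. h \<noteq> [] \<longrightarrow> unbiased_op n k (fst (A h)) \<and> length (snd (A h)) = k \<and>
                       (\<forall>i\<in>set (snd (A h)). i < length h))"

text \<open>Distribution of the first t+1 search points (x^(0),...,x^(t)).\<close>
primrec hist :: "nat \<Rightarrow> (bool list \<Rightarrow> nat) \<Rightarrow> algorithm \<Rightarrow> nat \<Rightarrow> bool list list pmf" where
  "hist n f A 0 = map_pmf (\<lambda>x. [x]) (pmf_of_set (bitstrings n))"
| "hist n f A (Suc t) = bind_pmf (hist n f A t)
     (\<lambda>xs. map_pmf (\<lambda>y. xs @ [y]) (fst (A (map f xs)) (map ((!) xs) (snd (A (map f xs))))))"

definition is_opt :: "nat \<Rightarrow> (bool list \<Rightarrow> nat) \<Rightarrow> bool list \<Rightarrow> bool" where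
  "is_opt n f x \<longleftrightarrow> x \<in> bitstrings n \<and> (\<forall>y\<in>bitstrings n. f y \<le> f x)"

text \<open>Expected runtime T (number of evaluations up to and including the first optimum),
  via E[T] = sum_{s>=0} P(T > s), where P(T > 0) = 1 and
  P(T > t+1) = P(none of x^(0),...,x^(t) is optimal).\<close>
definition exp_runtime :: "nat \<Rightarrow> (bool list \<Rightarrow> nat) \<Rightarrow> algorithm \<Rightarrow> ennreal" where
  "exp_runtime n f A =
     1 + (\<Sum>t. ennreal (measure_pmf.prob (hist n f A t) {xs. \<forall>x\<in>set xs. \<not> is_opt n f x}))"

definition unbiased_bbc :: "nat \<Rightarrow> nat \<Rightarrow> (bool list \<Rightarrow> nat) \<Rightarrow> ennreal" where
  "unbiased_bbc k n f = (INF A \<in> {A. valid_alg n k A}. exp_runtime n f A)"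

end

theory Submission
  imports Defs
begin

text \<open>The algorithm fixes the blocks of DLB from left to right.  It keeps two search points \<open>x\<close>
  and \<open>y\<close> that are all-ones on the solved blocks and complementary on all other positions.  To
  set the next block of \<open>x\<close> to \<open>11\<close>, it keeps a partner \<open>w\<close> such that the positions where \<open>x\<close>
  and \<open>w\<close> differ include the zeros of the block, and flips in \<open>x\<close> a uniformly random half of
  these positions.  The fitness of the offspring tells whether, inside the block, exactly the
  zeros were flipped; this happens with probability at least \<open>1/8\<close>, and then the offspring
  becomes the new partner.  After \<open>O(log n)\<close> such halvings the partner is \<open>x\<close> with the block
  completed; the same is then done for \<open>y\<close>, and the two completed points form the pair for the
  next block.  An additive drift argument, with a potential that charges \<open>8\<close> for each remaining
  halving, turns this into the bound \<open>O(n log n)\<close> on the expected number of evaluations.\<close>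

section \<open>A binary unbiased flip operator\<close>

lemma finite_bitstrings: "finite (bitstrings n)"
  unfolding bitstrings_def using finite_lists_length_eq[of "UNIV :: bool set" n] by simp

definition diff_pos :: "nat \<Rightarrow> bool list \<Rightarrow> bool list \<Rightarrow> nat set" where
  "diff_pos n u v = {i. i < n \<and> u ! i \<noteq> v ! i}"

definition flip_set :: "nat \<Rightarrow> bool list \<Rightarrow> nat set \<Rightarrow> bool list" where
  "flip_set n u D = map (\<lambda>i. if i \<in> D then \<not> u ! i else u ! i) [0..<n]"

lemma diff_pos_subset: "diff_pos n u v \<subseteq> {..<n}"
  by (auto simp: diff_pos_def)

lemma finite_diff_pos: "finite (diff_pos n u v)"
  using finite_subset[OF diff_pos_subset] by blast

lemma diff_pos_commute: "diff_pos n u v = diff_pos n v u"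
  by (auto simp: diff_pos_def)

lemma length_flip_set [simp]: "length (flip_set n u D) = n"
  by (simp add: flip_set_def)

lemma diff_pos_flip_set: "length u = n \<Longrightarrow> D \<subseteq> {..<n} \<Longrightarrow> diff_pos n (flip_set n u D) u = D"
  by (auto simp: diff_pos_def flip_set_def)

lemma flip_set_diff_pos: "length y = n \<Longrightarrow> length u = n \<Longrightarrow> flip_set n u (diff_pos n y u) = y"
  by (auto simp: diff_pos_def flip_set_def intro!: nth_equalityI)

lemma card_bitstrings_by_diff_pos:
  assumes "length u = n" and "\<And>D. P D \<Longrightarrow> D \<subseteq> {..<n}"
  shows "card {y \<in> bitstrings n. P (diff_pos n y u)} = card {D. P D}"
proof -
  have "bij_betw (\<lambda>y. diff_pos n y u) {y \<in> bitstrings n. P (diff_pos n y u)} {D. P D}"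
    by (rule bij_betw_byWitness[where f' = "flip_set n u"])
       (use assms diff_pos_subset in \<open>auto simp: bitstrings_def flip_set_diff_pos diff_pos_flip_set\<close>)
  then show ?thesis by (rule bij_betw_same_card)
qed

definition flip_targets :: "nat \<Rightarrow> nat \<Rightarrow> nat \<Rightarrow> bool list \<Rightarrow> bool list \<Rightarrow> bool list set" where
  "flip_targets n a b u v = {w \<in> bitstrings n.
     card (diff_pos n w u \<inter> diff_pos n u v) = a \<and> card (diff_pos n w u - diff_pos n u v) = b}"

definition flip_op :: "nat \<Rightarrow> nat \<Rightarrow> nat \<Rightarrow> bool list list \<Rightarrow> bool list pmf" where
  "flip_op n a b xs =
     (if flip_targets n a b (xs ! 0) (xs ! 1) = {} then return_pmf (xs ! 0)
      else pmf_of_set (flip_targets n a b (xs ! 0) (xs ! 1)))"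

lemma finite_flip_targets: "finite (flip_targets n a b u v)"
  by (rule finite_subset[OF _ finite_bitstrings[of n]]) (auto simp: flip_targets_def)

lemma flip_targets_0:
  "flip_targets n s 0 u w = {y \<in> bitstrings n. diff_pos n y u \<subseteq> diff_pos n u w \<and> card (diff_pos n y u) = s}"
  using finite_diff_pos by (auto simp: flip_targets_def Int_absorb2)

lemma flip_targets_complement:
  assumes x: "length x = n"
  shows "flip_targets n 0 n x x = {map Not x}"
proof -
  have "diff_pos n x x = {}"
    by (simp add: diff_pos_def)
  then have "flip_targets n 0 n x x = {w \<in> bitstrings n. card (diff_pos n w x) = n}"
    by (simp add: flip_targets_def)
  also have "\<dots> = {w \<in> bitstrings n. w = map Not x}"
  proof -
    have "card (diff_pos n w x) = n \<longleftrightarrow> w = map Not x" if "length w = n" for w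
    proof
      assume "card (diff_pos n w x) = n"
      then have "diff_pos n w x = {..<n}"
        using card_subset_eq[OF finite_lessThan diff_pos_subset] by simp
      then have "w ! i = (\<not> x ! i)" if "i < n" for i
        using that by (auto simp: diff_pos_def)
      then show "w = map Not x"
        using x \<open>length w = n\<close> by (intro nth_equalityI) simp_all
    next
      assume "w = map Not x"
      then have "diff_pos n w x = {..<n}"
        using x by (auto simp: diff_pos_def)
      then show "card (diff_pos n w x) = n" by simp
    qed
    then show ?thesis by (auto simp: bitstrings_def)
  qed
  also have "\<dots> = {map Not x}"
    using x by (auto simp: bitstrings_def)
  finally show ?thesis .
qed

lemma flip_targets_image:
  assumes T: "T ` bitstrings n \<subseteq> bitstrings n" and g: "inj_on g {..<n}"
    and diff: "\<And>x y. x \<in> bitstrings n \<Longrightarrow> y \<in> bitstrings n \<Longrightarrow> diff_pos n (T x) (T y) = g ` diff_pos n x y"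
    and u: "u \<in> bitstrings n" and v: "v \<in> bitstrings n" and w: "w \<in> bitstrings n"
  shows "T w \<in> flip_targets n a b (T u) (T v) \<longleftrightarrow> w \<in> flip_targets n a b u v"
proof -
  have sub: "diff_pos n x y \<subseteq> {..<n}" for x y
    by (rule diff_pos_subset)
  have "g ` (diff_pos n w u \<inter> diff_pos n u v) = diff_pos n (T w) (T u) \<inter> diff_pos n (T u) (T v)"
    "g ` (diff_pos n w u - diff_pos n u v) = diff_pos n (T w) (T u) - diff_pos n (T u) (T v)"
    using inj_on_image_Int[OF g sub sub] inj_on_image_set_diff[OF g Diff_subset[THEN subset_trans, OF sub] sub]
      u v w by (simp_all add: diff)
  moreover have "inj_on g (diff_pos n w u \<inter> diff_pos n u v)" "inj_on g (diff_pos n w u - diff_pos n u v)"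
    using inj_on_subset[OF g] sub by blast+
  ultimately have
    "card (diff_pos n (T w) (T u) \<inter> diff_pos n (T u) (T v)) = card (diff_pos n w u \<inter> diff_pos n u v)"
    "card (diff_pos n (T w) (T u) - diff_pos n (T u) (T v)) = card (diff_pos n w u - diff_pos n u v)"
    by (metis card_image)+
  then show ?thesis using T w by (auto simp: flip_targets_def)
qed

lemma pmf_flip_op_invariant:
  assumes T: "bij_betw T (bitstrings n) (bitstrings n)" and g: "inj_on g {..<n}"
    and diff: "\<And>x y. x \<in> bitstrings n \<Longrightarrow> y \<in> bitstrings n \<Longrightarrow> diff_pos n (T x) (T y) = g ` diff_pos n x y"
    and u: "u \<in> bitstrings n" and v: "v \<in> bitstrings n" and y: "y \<in> bitstrings n"
  shows "pmf (flip_op n a b [u, v]) y = pmf (flip_op n a b [T u, T v]) (T y)"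
proof -
  have T_into: "T ` bitstrings n \<subseteq> bitstrings n" and inj: "inj_on T (bitstrings n)"
    using T by (auto simp: bij_betw_def)
  have mem: "T w \<in> flip_targets n a b (T u) (T v) \<longleftrightarrow> w \<in> flip_targets n a b u v"
    if "w \<in> bitstrings n" for w
    by (rule flip_targets_image[OF T_into g _ u v that]) (simp add: diff)
  have sub: "flip_targets n a b u v \<subseteq> bitstrings n" "flip_targets n a b (T u) (T v) \<subseteq> bitstrings n"
    by (auto simp: flip_targets_def)
  have img: "flip_targets n a b (T u) (T v) = T ` flip_targets n a b u v"
  proof (intro equalityI subsetI)
    fix w' assume w': "w' \<in> flip_targets n a b (T u) (T v)"
    then obtain w where "w \<in> bitstrings n" "w' = T w"
      using sub(2) T by (force simp: bij_betw_def)
    with w' mem show "w' \<in> T ` flip_targets n a b u v" by blast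
  qed (use mem sub(1) in auto)
  have card: "card (flip_targets n a b (T u) (T v)) = card (flip_targets n a b u v)"
    unfolding img by (rule card_image[OF inj_on_subset[OF inj sub(1)]])
  have "T y = T u \<longleftrightarrow> y = u"
    using inj u y by (auto simp: inj_on_def)
  then show ?thesis
    using img card mem[OF y] finite_flip_targets
    by (auto simp: flip_op_def pmf_of_set indicator_def)
qed

lemma length_xor_bits: "length (xor_bits x z) = min (length x) (length z)"
  by (simp add: xor_bits_def)

lemma nth_xor_bits: "i < length x \<Longrightarrow> i < length z \<Longrightarrow> xor_bits x z ! i = (x ! i \<noteq> z ! i)"
  by (simp add: xor_bits_def)

lemma xor_bits_xor_bits: "length x = length z \<Longrightarrow> xor_bits (xor_bits x z) z = x"
  by (rule nth_equalityI) (auto simp: length_xor_bits nth_xor_bits)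

lemma bij_betw_xor_bits: "z \<in> bitstrings n \<Longrightarrow> bij_betw (\<lambda>x. xor_bits x z) (bitstrings n) (bitstrings n)"
  by (rule bij_betw_byWitness[where f' = "\<lambda>x. xor_bits x z"])
     (auto simp: bitstrings_def length_xor_bits xor_bits_xor_bits)

lemma diff_pos_xor_bits:
  "x \<in> bitstrings n \<Longrightarrow> y \<in> bitstrings n \<Longrightarrow> z \<in> bitstrings n \<Longrightarrow>
    diff_pos n (xor_bits x z) (xor_bits y z) = id ` diff_pos n x y"
  by (auto simp: diff_pos_def bitstrings_def nth_xor_bits)

lemma length_perm_bits [simp]: "length (perm_bits n \<sigma> x) = n"
  by (simp add: perm_bits_def)

lemma perm_bits_inv:
  assumes \<sigma>: "\<sigma> permutes {..<n}" and x: "length x = n"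
  shows "perm_bits n (inv \<sigma>) (perm_bits n \<sigma> x) = x"
proof (rule nth_equalityI)
  fix i assume "i < length (perm_bits n (inv \<sigma>) (perm_bits n \<sigma> x))"
  then have "i < n" "inv \<sigma> i < n"
    using permutes_in_image[OF permutes_inv[OF \<sigma>]] by auto
  then show "perm_bits n (inv \<sigma>) (perm_bits n \<sigma> x) ! i = x ! i"
    by (simp add: perm_bits_def permutes_inverses(1)[OF \<sigma>])
qed (simp add: x)

lemma bij_betw_perm_bits:
  assumes \<sigma>: "\<sigma> permutes {..<n}"
  shows "bij_betw (perm_bits n \<sigma>) (bitstrings n) (bitstrings n)"
proof (rule bij_betw_byWitness[where f' = "perm_bits n (inv \<sigma>)"])
  have "perm_bits n \<sigma> (perm_bits n (inv \<sigma>) x) = x" if "length x = n" for x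
    using perm_bits_inv[OF permutes_inv[OF \<sigma>] that] by (simp only: permutes_inv_inv[OF \<sigma>])
  then show "\<forall>x\<in>bitstrings n. perm_bits n \<sigma> (perm_bits n (inv \<sigma>) x) = x"
    by (simp add: bitstrings_def)
qed (simp_all add: bitstrings_def perm_bits_inv[OF \<sigma>] image_subset_iff)

lemma diff_pos_perm_bits:
  assumes \<sigma>: "\<sigma> permutes {..<n}"
  shows "diff_pos n (perm_bits n \<sigma> x) (perm_bits n \<sigma> y) = inv \<sigma> ` diff_pos n x y"
proof -
  have \<sigma>_lt: "\<sigma> i < n" "inv \<sigma> i < n" if "i < n" for i
    using that by (meson \<sigma> lessThan_iff permutes_in_image permutes_inv)+
  have "diff_pos n (perm_bits n \<sigma> x) (perm_bits n \<sigma> y) = {i. i < n \<and> \<sigma> i \<in> diff_pos n x y}"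
    by (force simp: diff_pos_def perm_bits_def intro: \<sigma>_lt(1))
  also have "\<dots> = inv \<sigma> ` diff_pos n x y"
  proof (intro equalityI subsetI)
    fix i assume i: "i \<in> {i. i < n \<and> \<sigma> i \<in> diff_pos n x y}"
    have "i = inv \<sigma> (\<sigma> i)" by (simp add: permutes_inverses(2)[OF \<sigma>])
    with i show "i \<in> inv \<sigma> ` diff_pos n x y" by blast
  next
    fix i assume "i \<in> inv \<sigma> ` diff_pos n x y"
    then obtain j where j: "j \<in> diff_pos n x y" "i = inv \<sigma> j" by blast
    then have "j < n" by (simp add: diff_pos_def)
    then show "i \<in> {i. i < n \<and> \<sigma> i \<in> diff_pos n x y}"
      using j \<sigma>_lt(2) by (simp add: permutes_inverses(1)[OF \<sigma>])
  qed
  finally show ?thesis .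
qed

lemma pmf_flip_op_xor_bits:
  assumes "u \<in> bitstrings n" "v \<in> bitstrings n" "y \<in> bitstrings n" "z \<in> bitstrings n"
  shows "pmf (flip_op n a b [u, v]) y = pmf (flip_op n a b [xor_bits u z, xor_bits v z]) (xor_bits y z)"
  by (rule pmf_flip_op_invariant[OF bij_betw_xor_bits[OF assms(4)] inj_on_id _ assms(1-3)])
     (simp add: diff_pos_xor_bits assms(4))

lemma pmf_flip_op_perm_bits:
  assumes "u \<in> bitstrings n" "v \<in> bitstrings n" "y \<in> bitstrings n" "\<sigma> permutes {..<n}"
  shows "pmf (flip_op n a b [u, v]) y =
    pmf (flip_op n a b [perm_bits n \<sigma> u, perm_bits n \<sigma> v]) (perm_bits n \<sigma> y)"
  by (rule pmf_flip_op_invariant[OF bij_betw_perm_bits[OF assms(4)] permutes_inj_on[OF permutes_inv[OF assms(4)]]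
        _ assms(1-3)])
     (rule diff_pos_perm_bits[OF assms(4)])

lemma unbiased_flip_op: "unbiased_op n 2 (flip_op n a b)"
  unfolding unbiased_op_def
proof (intro conjI allI impI)
  fix xs :: "bool list list"
  assume xs: "length xs = 2 \<and> set xs \<subseteq> bitstrings n"
  then obtain u v where "xs = [u, v]" by (auto simp: numeral_2_eq_2 length_Suc_conv)
  then show "set_pmf (flip_op n a b xs) \<subseteq> bitstrings n"
    using xs finite_flip_targets[of n a b u v] by (auto simp: flip_op_def flip_targets_def)
next
  fix xs :: "bool list list" and y z
  assume xs: "length xs = 2 \<and> set xs \<subseteq> bitstrings n \<and> y \<in> bitstrings n \<and> z \<in> bitstrings n"
  then obtain u v where uv: "xs = [u, v]" by (auto simp: numeral_2_eq_2 length_Suc_conv)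
  show "pmf (flip_op n a b xs) y = pmf (flip_op n a b (map (\<lambda>x. xor_bits x z) xs)) (xor_bits y z)"
    unfolding uv list.map by (rule pmf_flip_op_xor_bits) (use xs uv in auto)
next
  fix xs :: "bool list list" and y \<sigma>
  assume xs: "length xs = 2 \<and> set xs \<subseteq> bitstrings n \<and> y \<in> bitstrings n \<and> \<sigma> permutes {..<n}"
  then obtain u v where uv: "xs = [u, v]" by (auto simp: numeral_2_eq_2 length_Suc_conv)
  show "pmf (flip_op n a b xs) y = pmf (flip_op n a b (map (perm_bits n \<sigma>) xs)) (perm_bits n \<sigma> y)"
    unfolding uv list.map by (rule pmf_flip_op_perm_bits) (use xs uv in auto)
qed

section \<open>Counting subsets\<close>

lemma card_subsets_with_trace:
  assumes fin: "finite C" and ZK: "Z \<subseteq> K" and KC: "K \<subseteq> C" and Zs: "card Z \<le> s"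
  shows "card {S. S \<subseteq> C \<and> card S = s \<and> S \<inter> K = Z} = (card C - card K) choose (s - card Z)"
proof -
  have finK: "finite K" using KC fin by (rule finite_subset)
  have finZ: "finite Z" using ZK finK by (rule finite_subset)
  have bij: "bij_betw (\<lambda>T. T \<union> Z) {T. T \<subseteq> C - K \<and> card T = s - card Z} {S. S \<subseteq> C \<and> card S = s \<and> S \<inter> K = Z}"
  proof (rule bij_betw_byWitness[where f'="\<lambda>S. S - Z"])
    show "\<forall>T\<in>{T. T \<subseteq> C - K \<and> card T = s - card Z}. T \<union> Z - Z = T" using ZK by blast
    show "\<forall>S\<in>{S. S \<subseteq> C \<and> card S = s \<and> S \<inter> K = Z}. S - Z \<union> Z = S" by blast
    show "(\<lambda>T. T \<union> Z) ` {T. T \<subseteq> C - K \<and> card T = s - card Z} \<subseteq> {S. S \<subseteq> C \<and> card S = s \<and> S \<inter> K = Z}"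
    proof
      fix S assume "S \<in> (\<lambda>T. T \<union> Z) ` {T. T \<subseteq> C - K \<and> card T = s - card Z}"
      then obtain T where T: "T \<subseteq> C - K" "card T = s - card Z" "S = T \<union> Z" by auto
      have finT: "finite T" using T(1) fin by (meson Diff_subset finite_subset)
      have dj: "T \<inter> Z = {}" using T(1) ZK by auto
      have "card S = card T + card Z" using T(3) card_Un_disjoint[OF finT finZ dj] by simp
      moreover have "S \<subseteq> C" using T(1,3) ZK KC by blast
      moreover have "S \<inter> K = Z" using T(1,3) ZK by blast
      ultimately show "S \<in> {S. S \<subseteq> C \<and> card S = s \<and> S \<inter> K = Z}" using T(2) Zs by simp
    qed
    show "(\<lambda>S. S - Z) ` {S. S \<subseteq> C \<and> card S = s \<and> S \<inter> K = Z} \<subseteq> {T. T \<subseteq> C - K \<and> card T = s - card Z}"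
    proof
      fix T assume "T \<in> (\<lambda>S. S - Z) ` {S. S \<subseteq> C \<and> card S = s \<and> S \<inter> K = Z}"
      then obtain S where S: "S \<subseteq> C" "card S = s" "S \<inter> K = Z" "T = S - Z" by auto
      have finS: "finite S" using S(1) fin by (rule finite_subset)
      have "Z \<subseteq> S" using S(3) by blast
      then have "card T = s - card Z" using S(2,4) card_Diff_subset[OF finZ] by simp
      moreover have "T \<subseteq> C - K" using S(1,3,4) by blast
      ultimately show "T \<in> {T. T \<subseteq> C - K \<and> card T = s - card Z}" by simp
    qed
  qed
  have "card {T. T \<subseteq> C - K \<and> card T = s - card Z} = card (C - K) choose (s - card Z)"
    using n_subsets[of "C - K" "s - card Z"] fin by simp
  moreover have "card (C - K) = card C - card K" using card_Diff_subset[OF finK KC] .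
  ultimately show ?thesis using bij_betw_same_card[OF bij] by simp
qed

lemma binomial_le_pred:
  assumes "1 \<le> s" "c \<le> 2 * s"
  shows "c choose s \<le> 2 * ((c - 1) choose (s - 1))"
proof -
  have "s * (c choose s) = c * ((c - 1) choose (s - 1))"
    using times_binomial_minus1_eq[of s c] assms by simp
  also have "\<dots> \<le> s * (2 * ((c - 1) choose (s - 1)))"
    using assms by simp
  finally show ?thesis using assms by simp
qed

lemma binomial_le_pred_pred:
  assumes "2 \<le> s" "3 \<le> c" "c \<le> 2 * s" "2 * s \<le> c + 1"
  shows "c choose s \<le> 8 * ((c - 2) choose (s - 2))"
proof -
  have "(s - 1) * ((c - 1) choose (s - 1)) = (c - 1) * ((c - 1 - 1) choose (s - 1 - 1))"
    using times_binomial_minus1_eq[of "s - 1" "c - 1"] assms by simp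
  then have "(s - 1) * ((c - 1) choose (s - 1)) = (c - 1) * ((c - 2) choose (s - 2))"
    by (simp only: diff_diff_left one_add_one)
  moreover have "s * (c choose s) = c * ((c - 1) choose (s - 1))"
    using times_binomial_minus1_eq[of s c] assms by simp
  ultimately have eq: "s * (s - 1) * (c choose s) = c * (c - 1) * ((c - 2) choose (s - 2))"
    by (metis mult.assoc mult.left_commute)
  have "c * (c - 2) \<le> (2 * s) * (2 * (s - 1))"
    using assms by (intro mult_le_mono) auto
  moreover have "c * (c - 1) \<le> c * (2 * (c - 2))"
    using assms by (intro mult_le_mono) auto
  ultimately have "c * (c - 1) \<le> 8 * (s * (s - 1))"
    by (simp add: algebra_simps)
  then have "c * (c - 1) * (c choose s) \<le> 8 * (s * (s - 1)) * (c choose s)" by simp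
  also have "\<dots> = c * (c - 1) * (8 * ((c - 2) choose (s - 2)))" using eq by simp
  finally show ?thesis using assms by simp
qed

lemma binomial_le_pred2:
  assumes "1 \<le> s" "2 \<le> c" "c \<le> 2 * s" "2 * s \<le> c + 1"
  shows "c choose s \<le> 8 * ((c - 2) choose (s - 1))"
proof -
  have "((c - 1) - (s - 1)) * ((c - 1) choose (s - 1)) = (c - 1) * ((c - 1 - 1) choose (s - 1))"
    by (rule binomial_absorb_comp)
  then have "(c - s) * ((c - 1) choose (s - 1)) = (c - 1) * ((c - 2) choose (s - 1))"
    using assms by (simp only: diff_diff_left one_add_one) simp
  moreover have "s * (c choose s) = c * ((c - 1) choose (s - 1))"
    using times_binomial_minus1_eq[of s c] assms by simp
  ultimately have eq: "s * (c - s) * (c choose s) = c * (c - 1) * ((c - 2) choose (s - 1))"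
    by (metis mult.assoc mult.left_commute)
  have "c * (c - 1) \<le> (2 * s) * (2 * (c - s))"
    using assms by (intro mult_le_mono) auto
  then have "c * (c - 1) \<le> 8 * (s * (c - s))"
    by (simp add: algebra_simps)
  then have "c * (c - 1) * (c choose s) \<le> 8 * (s * (c - s)) * (c choose s)" by simp
  also have "\<dots> = c * (c - 1) * (8 * ((c - 2) choose (s - 1)))" using eq by simp
  finally show ?thesis using assms by simp
qed

lemma binomial_half_le:
  assumes "1 \<le> z" "z \<le> k" "k \<le> 2" "z < c" "k \<le> c"
  shows "c choose ((c + 1) div 2) \<le> 8 * ((c - k) choose ((c + 1) div 2 - z))"
proof -
  define s where "s = (c + 1) div 2"
  have s: "c \<le> 2 * s" "2 * s \<le> c + 1" "1 \<le> s"
    using assms unfolding s_def by auto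
  consider "k = 1" "z = 1" | "k = 2" "z = 1" | "k = 2" "z = 2"
    using assms by linarith
  then show ?thesis
  proof cases
    case 1
    then show ?thesis using binomial_le_pred[of s c] s unfolding s_def by simp
  next
    case 2
    then show ?thesis using binomial_le_pred2[of s c] s assms unfolding s_def by simp
  next
    case 3
    then show ?thesis using binomial_le_pred_pred[of s c] s assms unfolding s_def by simp
  qed
qed

section \<open>Repeated halving\<close>

function halvings :: "nat \<Rightarrow> nat \<Rightarrow> nat" where
  "halvings c z = (if c \<le> z \<or> c \<le> 1 then 0 else Suc (halvings ((c + 1) div 2) z))"
  by auto
termination by (relation "Wellfounded.measure fst") auto

declare halvings.simps [simp del]

lemma halvings_eq_0: "c \<le> z \<or> c \<le> 1 \<Longrightarrow> halvings c z = 0"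
  by (subst halvings.simps) simp

lemma halvings_eq_Suc: "\<not> (c \<le> z \<or> c \<le> 1) \<Longrightarrow> halvings c z = Suc (halvings ((c + 1) div 2) z)"
  by (subst halvings.simps) simp

lemma halvings_mono: "c \<le> c' \<Longrightarrow> 1 \<le> z' \<Longrightarrow> z' \<le> z \<Longrightarrow> halvings c z \<le> halvings c' z'"
proof (induction c' arbitrary: c rule: less_induct)
  case (less c')
  show ?case
  proof (cases "c \<le> z \<or> c \<le> 1")
    case False
    then have "halvings ((c + 1) div 2) z \<le> halvings ((c' + 1) div 2) z'"
      using less by (intro less.IH) auto
    moreover have F': "\<not> (c' \<le> z' \<or> c' \<le> 1)" using False less.prems by auto
    ultimately show ?thesis unfolding halvings_eq_Suc[OF False] halvings_eq_Suc[OF F'] by simp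
  qed (simp add: halvings_eq_0)
qed

lemma two_power_halvings: "2 \<le> c \<Longrightarrow> 2 ^ halvings c 1 \<le> 2 * c - 2"
proof (induction c rule: less_induct)
  case (less c)
  show ?case
  proof (cases "c = 2")
    case True
    have "halvings 2 1 = Suc (halvings 1 1)" by (simp add: halvings_eq_Suc)
    with True show ?thesis by (simp add: halvings_eq_0)
  next
    case False
    then have "2 ^ halvings ((c + 1) div 2) 1 \<le> 2 * ((c + 1) div 2) - 2"
      using less by (intro less.IH) auto
    moreover have "halvings c 1 = Suc (halvings ((c + 1) div 2) 1)"
      using False less.prems by (intro halvings_eq_Suc) auto
    ultimately show ?thesis using False less.prems by simp
  qed
qed

lemma halvings_le_ln:
  assumes "2 \<le> n"
  shows "real (halvings n 1) \<le> 4 * ln (real n)"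
proof -
  have "2 * n \<le> n ^ 2"
    using mult_le_mono1[OF assms, of n] by (simp add: power2_eq_square)
  then have "2 ^ halvings n 1 \<le> n ^ 2"
    using two_power_halvings[OF assms] by linarith
  then have "(2::real) ^ halvings n 1 \<le> real n ^ 2"
    by (metis of_nat_le_iff of_nat_numeral of_nat_power)
  then have "real (halvings n 1) * ln 2 \<le> 2 * ln (real n)"
    using assms by (subst (asm) ln_le_cancel_iff[symmetric]) (auto simp: ln_realpow)
  moreover have "1 / 2 \<le> ln (2::real)"
    using ln_le_cancel_iff[of "exp (1 / 2)" 2] exp_half_le2 by simp
  then have "real (halvings n 1) * (1 / 2) \<le> real (halvings n 1) * ln 2"
    by (intro mult_left_mono) auto
  ultimately show ?thesis by linarith
qed

section \<open>Additive drift for black-box algorithms\<close>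

lemma nn_integral_pmf_of_set_drift:
  fixes g :: "'a \<Rightarrow> nat"
  assumes fin: "finite Y" and ne: "Y \<noteq> {}"
    and pointwise: "\<And>y. y \<in> Y \<Longrightarrow> g y + (if P y then k else 0) \<le> M"
    and often: "card Y \<le> k * card {y \<in> Y. P y}"
  shows "(\<integral>\<^sup>+ y. of_nat (g y) \<partial>measure_pmf (pmf_of_set Y)) + 1 \<le> (of_nat M :: ennreal)"
proof -
  define N where "N = card Y"
  have N: "0 < N" using fin ne unfolding N_def by (simp add: card_gt_0_iff)
  have "(\<Sum>y\<in>Y. g y + (if P y then k else 0)) \<le> N * M"
    using sum_mono[OF pointwise] by (simp add: N_def)
  moreover have "(\<Sum>y\<in>Y. (if P y then k else 0)) = k * card {y \<in> Y. P y}"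
    using fin by (simp add: sum.If_cases Int_def conj_commute)
  ultimately have "(\<Sum>y\<in>Y. g y) + N \<le> N * M"
    using often unfolding N_def sum.distrib by linarith
  then have "real (\<Sum>y\<in>Y. g y) + real N \<le> real N * real M"
    by (metis of_nat_add of_nat_le_iff of_nat_mult)
  then have le: "real (\<Sum>y\<in>Y. g y) / real N + 1 \<le> real M"
    using N by (simp add: field_simps)
  have "(\<integral>\<^sup>+ y. of_nat (g y) \<partial>measure_pmf (pmf_of_set Y)) =
      ennreal (real (\<Sum>y\<in>Y. g y)) / ennreal (real N)"
    using nn_integral_pmf_of_set[OF ne fin, of "\<lambda>y. of_nat (g y)"]
    by (simp add: N_def ennreal_of_nat_eq_real_of_nat)
  also have "\<dots> = ennreal (real (\<Sum>y\<in>Y. g y) / real N)"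
    using N by (intro divide_ennreal) (auto intro: sum_nonneg)
  moreover have "ennreal (real (\<Sum>y\<in>Y. g y) / real N) + 1 = ennreal (real (\<Sum>y\<in>Y. g y) / real N + 1)"
    using ennreal_plus[of "real (\<Sum>y\<in>Y. g y) / real N" 1] by (simp add: sum_nonneg)
  ultimately show ?thesis
    using le by (simp add: ennreal_of_nat_eq_real_of_nat ennreal_leI)
qed

definition next_hist :: "(bool list \<Rightarrow> nat) \<Rightarrow> algorithm \<Rightarrow> bool list list \<Rightarrow> bool list list pmf" where
  "next_hist f A xs =
     map_pmf (\<lambda>y. xs @ [y]) (fst (A (map f xs)) (map ((!) xs) (snd (A (map f xs)))))"

lemma hist_Suc_eq_bind: "hist n f A (Suc t) = bind_pmf (hist n f A t) (next_hist f A)"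
  by (simp add: next_hist_def[abs_def])

theorem exp_runtime_le_potential:
  fixes I :: "bool list list \<Rightarrow> bool" and \<Phi> :: "bool list list \<Rightarrow> nat"
  assumes init: "\<And>x. x \<in> bitstrings n \<Longrightarrow> I [x] \<and> \<Phi> [x] \<le> B"
    and invariant: "\<And>xs zs. I xs \<Longrightarrow> zs \<in> set_pmf (next_hist f A xs) \<Longrightarrow> I zs"
    and drift: "\<And>xs. I xs \<Longrightarrow>
      (\<integral>\<^sup>+ zs. of_nat (\<Phi> zs) \<partial>measure_pmf (next_hist f A xs))
        + indicator {xs. \<forall>x\<in>set xs. \<not> is_opt n f x} xs \<le> of_nat (\<Phi> xs)"
  shows "exp_runtime n f A \<le> of_nat B + 1"
proof -
  let ?E = "\<lambda>t. \<integral>\<^sup>+ xs. of_nat (\<Phi> xs) \<partial>measure_pmf (hist n f A t)"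
  let ?U = "\<lambda>t. ennreal (measure_pmf.prob (hist n f A t) {xs. \<forall>x\<in>set xs. \<not> is_opt n f x})"
  have bits: "set_pmf (pmf_of_set (bitstrings n)) = bitstrings n"
    using finite_bitstrings[of n] by (intro set_pmf_of_set) (auto simp: bitstrings_def intro: exI[of _ "replicate n True"])
  have I_hist: "I xs" if "xs \<in> set_pmf (hist n f A t)" for xs t
    using that by (induction t arbitrary: xs) (auto simp: bits hist_Suc_eq_bind init simp del: hist.simps(2) dest: invariant)
  have step: "?E (Suc t) + ?U t \<le> ?E t" for t
  proof -
    have "?E (Suc t) + ?U t = (\<integral>\<^sup>+ xs. (\<integral>\<^sup>+ zs. of_nat (\<Phi> zs) \<partial>measure_pmf (next_hist f A xs))
        + indicator {xs. \<forall>x\<in>set xs. \<not> is_opt n f x} xs \<partial>measure_pmf (hist n f A t))"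
      by (simp add: hist_Suc_eq_bind nn_integral_add measure_pmf.emeasure_eq_measure[symmetric]
          del: hist.simps(2))
    also have "\<dots> \<le> ?E t"
      by (intro nn_integral_mono_AE AE_pmfI drift I_hist)
    finally show ?thesis .
  qed
  have telescope: "?E t + (\<Sum>s<t. ?U s) \<le> ?E 0" for t
  proof (induction t)
    case (Suc t)
    have "?E (Suc t) + (\<Sum>s<Suc t. ?U s) = (?E (Suc t) + ?U t) + (\<Sum>s<t. ?U s)"
      by (simp add: algebra_simps)
    also have "\<dots> \<le> ?E 0"
      using add_right_mono[OF step] Suc.IH by (rule order_trans)
    finally show ?case .
  qed simp
  have "(\<Sum>s<t. ?U s) \<le> ?E 0" for t
    using telescope[of t] by (meson add_increasing order_trans zero_le order_refl)
  then have "(\<Sum>s. ?U s) \<le> ?E 0"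
    by (intro suminf_le_const) auto
  also have "?E 0 \<le> of_nat B"
    using init by (auto simp: bits intro!: measure_pmf.nn_integral_le_const AE_pmfI)
  finally show ?thesis
    unfolding exp_runtime_def by (simp add: add.commute add_right_mono)
qed

section \<open>The fitness function\<close>

lemma DLB_replicate_True [simp]: "DLB n (replicate n True) = n"
  by (simp add: DLB_def)

lemma DLB_defective_block_exists:
  assumes "length y = n" "even n" "y \<noteq> replicate n True"
  shows "\<exists>l. 2 * l + 1 < n \<and> \<not> (y ! (2 * l) \<and> y ! (2 * l + 1))"
proof -
  obtain i where i: "i < n" "\<not> y ! i"
    using assms by (metis (full_types) in_set_conv_nth replicate_eqI)
  have "2 * (i div 2) + 1 < n" "i = 2 * (i div 2) \<or> i = 2 * (i div 2) + 1"
    using i(1) assms(2) by presburger+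
  with i show ?thesis by (intro exI[of _ "i div 2"]) auto
qed

lemma DLB_less:
  assumes "length y = n" "even n" "y \<noteq> replicate n True"
  shows "DLB n y < n"
proof -
  let ?P = "\<lambda>l. \<not> (y ! (2 * l) \<and> y ! (2 * l + 1))"
  obtain l where l: "2 * l + 1 < n" "?P l"
    using DLB_defective_block_exists[OF assms] by blast
  have "DLB n y \<le> 2 * (LEAST l. ?P l) + 1"
    unfolding DLB_def Let_def using assms(3) by auto
  with Least_le[of ?P, OF l(2)] l(1) show ?thesis by linarith
qed

lemma is_opt_DLB_iff:
  assumes "even n"
  shows "is_opt n (DLB n) x \<longleftrightarrow> x = replicate n True"
proof
  assume opt: "is_opt n (DLB n) x"
  have "replicate n True \<in> bitstrings n"
    by (simp add: bitstrings_def)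
  with opt have "DLB n (replicate n True) \<le> DLB n x"
    unfolding is_opt_def by blast
  moreover have "length x = n"
    using opt by (simp add: is_opt_def bitstrings_def)
  ultimately
  show "x = replicate n True"
    using DLB_less[OF _ assms, of x] by (metis DLB_replicate_True not_le)
next
  have "DLB n y \<le> n" if "length y = n" for y
    using DLB_less[OF that assms] by (cases "y = replicate n True") auto
  then show "x = replicate n True \<Longrightarrow> is_opt n (DLB n) x"
    by (simp add: is_opt_def bitstrings_def)
qed

definition block_zeros :: "nat \<Rightarrow> bool list \<Rightarrow> nat set" where
  "block_zeros m u = {i. (i = 2 * m \<or> i = 2 * m + 1) \<and> \<not> u ! i}"

lemma block_zeros_eq:
  "block_zeros m u = (if u ! (2 * m) then {} else {2 * m}) \<union> (if u ! (2 * m + 1) then {} else {2 * m + 1})"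
  by (auto simp: block_zeros_def)

text \<open>Once the first \<open>m\<close> blocks are known to be optimal, the fitness reveals the number
  of zeros in block \<open>m\<close>.\<close>
definition zeros_in_block :: "nat \<Rightarrow> nat \<Rightarrow> nat" where
  "zeros_in_block m f = (if f = 2 * m + 1 then 2 else if f = 2 * m then 1 else 0)"

lemma card_block_zeros_le: "card (block_zeros m u) \<le> 2"
  unfolding block_zeros_eq by (auto simp: card_insert_if)

lemma card_block_zeros_eq_0_iff: "card (block_zeros m u) = 0 \<longleftrightarrow> u ! (2 * m) \<and> u ! (2 * m + 1)"
  unfolding block_zeros_eq by auto

lemma card_block_zeros_eq_2_iff: "card (block_zeros m u) = 2 \<longleftrightarrow> \<not> u ! (2 * m) \<and> \<not> u ! (2 * m + 1)"
  unfolding block_zeros_eq by (auto simp: card_insert_if)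

context
  fixes n m :: nat and y :: "bool list"
  assumes len: "length y = n" and ev: "even n" and nm: "2 * m + 2 \<le> n"
    and prefix: "\<forall>i < 2 * m. y ! i"
begin

lemma DLB_defective_block:
  assumes "\<not> (y ! (2 * m) \<and> y ! (2 * m + 1))"
  shows "DLB n y = (if \<not> y ! (2 * m) \<and> \<not> y ! (2 * m + 1) then 2 * m + 1 else 2 * m)"
proof -
  let ?P = "\<lambda>l. \<not> (y ! (2 * l) \<and> y ! (2 * l + 1))"
  have "(LEAST l. ?P l) = m"
    using assms prefix by (intro Least_equality) (auto simp: not_less[symmetric])
  moreover have "y \<noteq> replicate n True" using assms nm by auto
  ultimately show ?thesis
    by (simp add: DLB_def Let_def)
qed

lemma DLB_ge_next_block_iff: "2 * m + 2 \<le> DLB n y \<longleftrightarrow> y ! (2 * m) \<and> y ! (2 * m + 1)"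
proof
  assume "2 * m + 2 \<le> DLB n y"
  then show "y ! (2 * m) \<and> y ! (2 * m + 1)"
    using DLB_defective_block by (cases "y ! (2 * m) \<and> y ! (2 * m + 1)") (auto split: if_splits)
next
  let ?P = "\<lambda>l. \<not> (y ! (2 * l) \<and> y ! (2 * l + 1))"
  assume ones: "y ! (2 * m) \<and> y ! (2 * m + 1)"
  show "2 * m + 2 \<le> DLB n y"
  proof (cases "y = replicate n True")
    case True
    then show ?thesis using nm by simp
  next
    case False
    obtain l where "?P l" using DLB_defective_block_exists[OF len ev False] by blast
    then have least: "?P (LEAST l. ?P l)" by (rule LeastI)
    have "m + 1 \<le> (LEAST l. ?P l)"
    proof (rule ccontr)
      assume "\<not> m + 1 \<le> (LEAST l. ?P l)"
      then have "(LEAST l. ?P l) < m \<or> (LEAST l. ?P l) = m" by linarith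
      then show False using least prefix ones by auto
    qed
    moreover have "2 * (LEAST l. ?P l) \<le> DLB n y"
      unfolding DLB_def Let_def using False by auto
    ultimately show ?thesis by linarith
  qed
qed

lemma zeros_in_block_DLB: "zeros_in_block m (DLB n y) = card (block_zeros m y)"
  using DLB_ge_next_block_iff DLB_defective_block card_block_zeros_eq_0_iff[of m y]
  by (cases "y ! (2 * m) \<and> y ! (2 * m + 1)") (auto simp: zeros_in_block_def block_zeros_eq)

end

section \<open>The algorithm\<close>

text \<open>In state \<open>Search m side ix iy ixd ic c z\<close> the blocks below \<open>m\<close> are solved, and \<open>ix\<close>, \<open>iy\<close>
  index a pair of search points that are all-ones below block \<open>m\<close> and complementary from block
  \<open>m\<close> on.  The algorithm is completing block \<open>m\<close> of the first (\<open>side = False\<close>) or of the second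
  point, the completion of the first one having index \<open>ixd\<close>.  The point with index \<open>ic\<close> differs
  from the point being completed in \<open>c\<close> positions, among them the \<open>z\<close> zeros of block \<open>m\<close>.
  Indices refer to the order of evaluation.\<close>
datatype state = Start | Finished | Search nat bool nat nat nat nat nat nat

text \<open>\<open>settle\<close> skips the rounds that need no search: if the block of the point to be completed
  has no zeros, or consists of zeros only and is the last block, then the completed point is that
  point itself, respectively its partner.\<close>
function settle :: "nat \<Rightarrow> nat list \<Rightarrow> nat \<Rightarrow> bool \<Rightarrow> nat \<Rightarrow> nat \<Rightarrow> nat \<Rightarrow> state" where
  "settle n h m side ix iy ixd =
    (if n \<le> 2 * m then Finished
     else
       let iu = (if side then iy else ix); iv = (if side then ix else iy);
           z = zeros_in_block m (h ! iu)
       in if z = 0 \<or> z = n - 2 * m then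
            (let ifill = (if z = 0 then iu else iv)
             in if side then settle n h (m + 1) False ixd ifill 0 else settle n h m True ix iy ifill)
          else Search m side ix iy ixd iv (n - 2 * m) z)"
  by auto
termination
  by (relation "Wellfounded.measure (\<lambda>(n, _, m, side, _). 2 * (n - 2 * m) + (if side then 0 else 1))")
    auto

declare settle.simps [simp del]

definition step :: "nat \<Rightarrow> nat list \<Rightarrow> state \<Rightarrow> state" where
  "step n h \<sigma> =
    (let t = length h - 1 in
     case \<sigma> of
       Start \<Rightarrow> settle n h 0 False 0 1 0
     | Finished \<Rightarrow> Finished
     | Search m side ix iy ixd ic c z \<Rightarrow>
         if last h < 2 * m + 2 then \<sigma>
         else if (c + 1) div 2 = z then
           (if side then settle n h (m + 1) False ixd t 0 else settle n h m True ix iy t)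
         else Search m side ix iy ixd t ((c + 1) div 2) z)"

primrec run :: "nat \<Rightarrow> nat list \<Rightarrow> state" where
  "run n [] = Finished"
| "run n (f # r) = (if r = [] then Start else step n (rev (f # r)) (run n r))"

definition state_of :: "nat \<Rightarrow> nat list \<Rightarrow> state" where
  "state_of n h = run n (rev h)"

lemma state_of_singleton [simp]: "state_of n [f] = Start"
  by (simp add: state_of_def)

lemma state_of_snoc: "h \<noteq> [] \<Longrightarrow> state_of n (h @ [f]) = step n (h @ [f]) (state_of n h)"
  by (simp add: state_of_def)

definition action :: "nat \<Rightarrow> state \<Rightarrow> (bool list list \<Rightarrow> bool list pmf) \<times> nat list" where
  "action n \<sigma> =
    (case \<sigma> of
       Start \<Rightarrow> (flip_op n 0 n, [0, 0]) \<comment> \<open>the complement of the first point\<close>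
     | Finished \<Rightarrow> (flip_op n 0 0, [0, 0])
     | Search m side ix iy ixd ic c z \<Rightarrow>
         (flip_op n ((c + 1) div 2) 0, [if side then iy else ix, ic]))"

text \<open>The fallback is never taken on histories of the algorithm itself; it only makes \<open>dlb_alg\<close>
  a valid algorithm on arbitrary fitness histories.\<close>
definition dlb_alg :: "nat \<Rightarrow> algorithm" where
  "dlb_alg n h =
    (if \<forall>i\<in>set (snd (action n (state_of n h))). i < length h then action n (state_of n h)
     else (flip_op n 0 0, [0, 0]))"

lemma valid_dlb_alg: "valid_alg n 2 (dlb_alg n)"
proof -
  have "unbiased_op n 2 (fst (action n \<sigma>))" "length (snd (action n \<sigma>)) = 2" for \<sigma>
    by (cases \<sigma>; simp add: action_def unbiased_flip_op)+
  then show ?thesis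
    unfolding valid_alg_def dlb_alg_def using unbiased_flip_op by (auto simp: Let_def)
qed

section \<open>Invariants and potential\<close>

definition complementary_pair :: "nat \<Rightarrow> nat \<Rightarrow> bool list \<Rightarrow> bool list \<Rightarrow> bool" where
  "complementary_pair n m x y \<longleftrightarrow> length x = n \<and> length y = n \<and> (\<forall>i < 2 * m. x ! i \<and> y ! i) \<and>
     (\<forall>i. 2 * m \<le> i \<and> i < n \<longrightarrow> x ! i \<noteq> y ! i)"

definition fill_block :: "nat \<Rightarrow> bool list \<Rightarrow> bool list" where
  "fill_block m x = x[2 * m := True, 2 * m + 1 := True]"

lemma complementary_pair_commute: "complementary_pair n m x y \<Longrightarrow> complementary_pair n m y x"
  by (auto simp: complementary_pair_def)

lemma complementary_pair_Not: "length x = n \<Longrightarrow> complementary_pair n 0 x (map Not x)"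
  by (simp add: complementary_pair_def)

lemma complementary_pair_solved: "complementary_pair n m x y \<Longrightarrow> n \<le> 2 * m \<Longrightarrow> x = replicate n True"
  unfolding complementary_pair_def by (auto intro!: nth_equalityI)

lemma diff_pos_complementary_pair: "complementary_pair n m x y \<Longrightarrow> diff_pos n x y = {2 * m..<n}"
  by (auto simp: complementary_pair_def diff_pos_def) (meson not_le)

lemma nth_fill_block:
  "i < length x \<Longrightarrow> fill_block m x ! i = (if i = 2 * m \<or> i = 2 * m + 1 then True else x ! i)"
  by (auto simp: fill_block_def nth_list_update)

lemma length_fill_block [simp]: "length (fill_block m x) = length x"
  by (simp add: fill_block_def)

lemma complementary_pair_fill_block:
  assumes "complementary_pair n m x y" "2 * m + 2 \<le> n"
  shows "complementary_pair n (m + 1) (fill_block m x) (fill_block m y)"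
  using assms unfolding complementary_pair_def
  by (auto simp: nth_fill_block less_Suc_eq)

lemma fill_block_eq_self: "x ! (2 * m) \<Longrightarrow> x ! (2 * m + 1) \<Longrightarrow> fill_block m x = x"
  by (metis fill_block_def list_update_id)

lemma fill_block_eq_partner:
  assumes "complementary_pair n m x y" "n = 2 * m + 2" "\<not> x ! (2 * m)" "\<not> x ! (2 * m + 1)"
  shows "fill_block m x = y"
  using assms unfolding complementary_pair_def
  by (auto simp: nth_fill_block less_Suc_eq intro!: nth_equalityI)

lemma flip_set_block_zeros:
  "length u = n \<Longrightarrow> 2 * m + 2 \<le> n \<Longrightarrow> flip_set n u (block_zeros m u) = fill_block m u"
  by (auto simp: flip_set_def block_zeros_def nth_fill_block intro!: nth_equalityI)

lemma fill_block_in_pair: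
  assumes pair: "complementary_pair n m u v" and "even n" "2 * m + 2 \<le> n"
    and z: "card (block_zeros m u) = 0 \<or> card (block_zeros m u) = n - 2 * m"
  shows "(if card (block_zeros m u) = 0 then u else v) = fill_block m u"
proof (cases "card (block_zeros m u) = 0")
  case True
  then show ?thesis by (simp add: card_block_zeros_eq_0_iff fill_block_eq_self)
next
  case False
  then have "n = 2 * m + 2" "card (block_zeros m u) = 2"
    using z card_block_zeros_le[of m u] assms(2,3) by presburger+
  then show ?thesis
    using False fill_block_eq_partner[OF pair] by (simp add: card_block_zeros_eq_2_iff)
qed

definition search_inv :: "nat \<Rightarrow> nat \<Rightarrow> bool list \<Rightarrow> bool list \<Rightarrow> nat \<Rightarrow> nat \<Rightarrow> bool" where
  "search_inv n m u w c z \<longleftrightarrow> diff_pos n u w \<subseteq> {2 * m..<n} \<and> card (diff_pos n u w) = c \<and>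
     block_zeros m u \<subseteq> diff_pos n u w \<and> z = card (block_zeros m u) \<and> 0 < z \<and> z < c"

lemma search_inv_start:
  assumes "complementary_pair n m u v" "2 * m + 2 \<le> n"
    and "card (block_zeros m u) \<noteq> 0" "card (block_zeros m u) \<noteq> n - 2 * m"
  shows "search_inv n m u v (n - 2 * m) (card (block_zeros m u))"
proof -
  have "block_zeros m u \<subseteq> {2 * m..<n}"
    using assms(2) by (auto simp: block_zeros_def)
  then show ?thesis
    using assms card_block_zeros_le[of m u] by (auto simp: search_inv_def diff_pos_complementary_pair)
qed

definition state_inv :: "nat \<Rightarrow> bool list list \<Rightarrow> state \<Rightarrow> bool" where
  "state_inv n xs \<sigma> \<longleftrightarrow>
    (case \<sigma> of
       Start \<Rightarrow> length xs = 1
     | Finished \<Rightarrow> replicate n True \<in> set xs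
     | Search m side ix iy ixd ic c z \<Rightarrow>
         2 * m + 2 \<le> n \<and> ix < length xs \<and> iy < length xs \<and> ic < length xs \<and>
         complementary_pair n m (xs ! ix) (xs ! iy) \<and>
         (side \<longrightarrow> ixd < length xs \<and> xs ! ixd = fill_block m (xs ! ix)) \<and>
         search_inv n m (xs ! (if side then iy else ix)) (xs ! ic) c z)"

text \<open>Each block is completed in two rounds, one for each point of the pair, and each round
  takes at most \<open>halvings n 1\<close> successful halvings of the search distance; a halving succeeds
  with probability at least \<open>1/8\<close>.\<close>
definition rounds_left :: "nat \<Rightarrow> nat \<Rightarrow> bool \<Rightarrow> nat" where
  "rounds_left n m side = 2 * (n div 2 - m) - (if side then 1 else 0)"

definition potential :: "nat \<Rightarrow> state \<Rightarrow> nat" where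
  "potential n \<sigma> =
    (case \<sigma> of
       Start \<Rightarrow> 8 * halvings n 1 * rounds_left n 0 False + 1
     | Finished \<Rightarrow> 0
     | Search m side ix iy ixd ic c z \<Rightarrow> 8 * (halvings c z + halvings n 1 * (rounds_left n m side - 1)))"

lemma rounds_left_next_round:
  assumes "even n" "2 * m + 2 \<le> n"
  shows "rounds_left n (m + 1) False + 1 = rounds_left n m True"
    and "rounds_left n m True + 1 = rounds_left n m False"
  using assms by (auto simp: rounds_left_def)

lemma settle_unfold:
  fixes side :: bool
  assumes ev: "even n" and nm: "2 * m + 2 \<le> n" and idx: "ix < length xs" "iy < length xs"
    and pair: "complementary_pair n m (xs ! ix) (xs ! iy)"
  defines "iu \<equiv> if side then iy else ix" and "iv \<equiv> if side then ix else iy"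
  defines "z \<equiv> card (block_zeros m (xs ! iu))"
  shows "settle n (map (DLB n) xs) m side ix iy ixd =
    (if z = 0 \<or> z = n - 2 * m then
       (if side then settle n (map (DLB n) xs) (m + 1) False ixd (if z = 0 then iu else iv) 0
        else settle n (map (DLB n) xs) m True ix iy (if z = 0 then iu else iv))
     else Search m side ix iy ixd iv (n - 2 * m) z)"
proof -
  have "zeros_in_block m (DLB n (xs ! iu)) = z"
    using zeros_in_block_DLB[OF _ ev nm] pair by (simp add: z_def iu_def complementary_pair_def)
  then show ?thesis
    using nm idx by (subst settle.simps) (simp add: Let_def iu_def iv_def)
qed

lemma completed_point_in_pair:
  fixes side :: bool
  assumes ev: "even n" and nm: "2 * m + 2 \<le> n" and idx: "ix < length xs" "iy < length xs"
    and pair: "complementary_pair n m (xs ! ix) (xs ! iy)"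
  defines "iu \<equiv> if side then iy else ix" and "iv \<equiv> if side then ix else iy"
  defines "z \<equiv> card (block_zeros m (xs ! iu))"
  assumes z: "z = 0 \<or> z = n - 2 * m"
  shows "(if z = 0 then iu else iv) < length xs" "xs ! (if z = 0 then iu else iv) = fill_block m (xs ! iu)"
proof -
  have "complementary_pair n m (xs ! iu) (xs ! iv)"
    using pair complementary_pair_commute by (auto simp: iu_def iv_def)
  then have "(if z = 0 then xs ! iu else xs ! iv) = fill_block m (xs ! iu)"
    using fill_block_in_pair[OF _ ev nm] z by (simp add: z_def)
  then show "(if z = 0 then iu else iv) < length xs" "xs ! (if z = 0 then iu else iv) = fill_block m (xs ! iu)"
    using idx by (auto simp: iu_def iv_def)
qed

lemma settle_Search_start:
  fixes side :: bool
  assumes ev: "even n" and nm: "2 * m + 2 \<le> n" and idx: "ix < length xs" "iy < length xs"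
    and pair: "complementary_pair n m (xs ! ix) (xs ! iy)"
    and filled: "side \<longrightarrow> ixd < length xs \<and> xs ! ixd = fill_block m (xs ! ix)"
  defines "iu \<equiv> if side then iy else ix" and "iv \<equiv> if side then ix else iy"
  defines "z \<equiv> card (block_zeros m (xs ! iu))"
  assumes z: "z \<noteq> 0" "z \<noteq> n - 2 * m"
  shows "state_inv n xs (Search m side ix iy ixd iv (n - 2 * m) z) \<and>
    potential n (Search m side ix iy ixd iv (n - 2 * m) z) \<le> 8 * halvings n 1 * rounds_left n m side"
proof -
  have "complementary_pair n m (xs ! iu) (xs ! iv)"
    using pair complementary_pair_commute by (auto simp: iu_def iv_def)
  then have "search_inv n m (xs ! iu) (xs ! iv) (n - 2 * m) z"
    using search_inv_start[OF _ nm] z by (simp add: z_def)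
  moreover have "halvings (n - 2 * m) z \<le> halvings n 1" "1 \<le> rounds_left n m side"
    using z nm ev by (auto simp: rounds_left_def intro!: halvings_mono)
  ultimately show ?thesis
    using nm idx pair filled
    by (auto simp: state_inv_def potential_def iu_def iv_def algebra_simps)
qed

lemma settle_inv:
  assumes ev: "even n" and "2 * m \<le> n" and "ix < length xs" "iy < length xs"
    and "complementary_pair n m (xs ! ix) (xs ! iy)"
    and "side \<longrightarrow> ixd < length xs \<and> xs ! ixd = fill_block m (xs ! ix)"
  shows "state_inv n xs (settle n (map (DLB n) xs) m side ix iy ixd) \<and>
    potential n (settle n (map (DLB n) xs) m side ix iy ixd) \<le> 8 * halvings n 1 * rounds_left n m side"
  using assms(2-)
proof (induction "2 * (n - 2 * m) + (if side then 0 else 1)" arbitrary: m side ix iy ixd rule: less_induct)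
  case less
  let ?h = "map (DLB n) xs" and ?H = "halvings n 1"
  show ?case
  proof (cases "n \<le> 2 * m")
    case True
    then have "xs ! ix \<in> set xs" "xs ! ix = replicate n True"
      using less.prems complementary_pair_solved by auto
    then show ?thesis using True by (simp add: settle.simps state_inv_def potential_def)
  next
    case False
    then have nm: "2 * m + 2 \<le> n" using ev by presburger
    define iu iv where "iu = (if side then iy else ix)" and "iv = (if side then ix else iy)"
    define z where "z = card (block_zeros m (xs ! iu))"
    note unfold = settle_unfold[OF ev nm less.prems(2-4), of side ixd, folded iu_def iv_def, folded z_def]
    show ?thesis
    proof (cases "z = 0 \<or> z = n - 2 * m")
      case known: True
      define ifill where "ifill = (if z = 0 then iu else iv)"
      have fill: "ifill < length xs" "xs ! ifill = fill_block m (xs ! iu)"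
        using completed_point_in_pair[OF ev nm less.prems(2-4), of side, folded iu_def iv_def, folded z_def]
          known by (simp_all add: ifill_def)
      note rounds = rounds_left_next_round[OF ev nm]
      show ?thesis
      proof (cases side)
        case True
        have "state_inv n xs (settle n ?h (m + 1) False ixd ifill 0) \<and>
          potential n (settle n ?h (m + 1) False ixd ifill 0) \<le> 8 * ?H * rounds_left n (m + 1) False"
          using less.prems fill True nm complementary_pair_fill_block[of n m "xs ! ix" "xs ! iy"]
          by (intro less.hyps) (auto simp: iu_def)
        then show ?thesis
          using unfold known True rounds(1)[symmetric] by (simp add: ifill_def)
      next
        case False
        have "state_inv n xs (settle n ?h m True ix iy ifill) \<and>
          potential n (settle n ?h m True ix iy ifill) \<le> 8 * ?H * rounds_left n m True"
          using less.prems fill False by (intro less.hyps) (auto simp: iu_def)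
        then show ?thesis
          using unfold known False rounds(2)[symmetric] by (simp add: ifill_def)
      qed
    next
      case False
      then show ?thesis
        using unfold settle_Search_start[OF ev nm less.prems(2-5)] by (simp add: iu_def iv_def z_def)
    qed
  qed
qed

section \<open>Analysis of a search step\<close>

lemma DLB_ge_next_block_iff_flipped:
  assumes u: "length u = n" and y: "length y = n" and ev: "even n" and nm: "2 * m + 2 \<le> n"
    and prefix: "\<forall>i < 2 * m. u ! i" and D: "diff_pos n y u \<subseteq> {2 * m..<n}"
  shows "2 * m + 2 \<le> DLB n y \<longleftrightarrow> diff_pos n y u \<inter> {2 * m, 2 * m + 1} = block_zeros m u"
proof -
  have y_nth: "y ! i = (u ! i \<noteq> (i \<in> diff_pos n y u))" if "i < n" for i
    using that by (auto simp: diff_pos_def)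
  have "\<forall>i < 2 * m. y ! i"
    using y_nth prefix D nm by auto
  then have "2 * m + 2 \<le> DLB n y \<longleftrightarrow> y ! (2 * m) \<and> y ! (2 * m + 1)"
    by (rule DLB_ge_next_block_iff[OF y ev nm])
  also have "\<dots> \<longleftrightarrow> diff_pos n y u \<inter> {2 * m, 2 * m + 1} = block_zeros m u"
    using y_nth[of "2 * m"] y_nth[of "2 * m + 1"] nm by (auto simp: block_zeros_def)
  finally show ?thesis .
qed

context
  fixes n m :: nat and u w :: "bool list" and c z :: nat
  assumes ev: "even n" and nm: "2 * m + 2 \<le> n" and u: "length u = n" and prefix: "\<forall>i < 2 * m. u ! i"
    and search: "search_inv n m u w c z"
begin

lemma search_succeeds_often:
  defines "Y \<equiv> flip_targets n ((c + 1) div 2) 0 u w"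
  shows "Y \<noteq> {}" and "card Y \<le> 8 * card {y \<in> Y. 2 * m + 2 \<le> DLB n y}"
proof -
  define C s K where "C = diff_pos n u w" and "s = (c + 1) div 2" and "K = C \<inter> {2 * m, 2 * m + 1}"
  have C: "finite C" "C \<subseteq> {..<n}" "card C = c" "C \<subseteq> {2 * m..<n}" "block_zeros m u \<subseteq> K"
    and z: "z = card (block_zeros m u)" "0 < z" "z < c"
    using search finite_diff_pos diff_pos_subset
    by (auto simp: search_inv_def C_def K_def block_zeros_def)
  have card_targets: "card {y \<in> bitstrings n. P (diff_pos n y u)} = card {D. P D}"
    if "\<And>D. P D \<Longrightarrow> D \<subseteq> C" for P
    by (rule card_bitstrings_by_diff_pos[OF u]) (use that C(2) in blast)
  have "card Y = c choose s"
    using card_targets[of "\<lambda>D. D \<subseteq> C \<and> card D = s"] n_subsets[OF C(1), of s] C(3)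
    by (simp add: Y_def flip_targets_0 C_def s_def conj_commute)
  moreover have "2 * m + 2 \<le> DLB n y \<longleftrightarrow> diff_pos n y u \<inter> K = block_zeros m u"
    if "y \<in> bitstrings n" "diff_pos n y u \<subseteq> C" for y
  proof -
    have "diff_pos n y u \<inter> K = diff_pos n y u \<inter> {2 * m, 2 * m + 1}"
      using that(2) by (auto simp: K_def)
    then show ?thesis
      using DLB_ge_next_block_iff_flipped[OF u _ ev nm prefix] that C(4) by (simp add: bitstrings_def)
  qed
  then have "{y \<in> Y. 2 * m + 2 \<le> DLB n y} =
      {y \<in> bitstrings n. diff_pos n y u \<subseteq> C \<and> card (diff_pos n y u) = s \<and> diff_pos n y u \<inter> K = block_zeros m u}"
    by (auto simp: Y_def flip_targets_0 C_def s_def)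
  then have "card {y \<in> Y. 2 * m + 2 \<le> DLB n y} = (c - card K) choose (s - z)"
    using card_targets[of "\<lambda>D. D \<subseteq> C \<and> card D = s \<and> D \<inter> K = block_zeros m u"]
      card_subsets_with_trace[OF C(1) C(5)] C(3) z card_block_zeros_le[of m u]
    by (simp add: K_def s_def)
  moreover have "c choose s \<le> 8 * ((c - card K) choose (s - z))"
  proof -
    have "card K \<le> card {2 * m, 2 * m + 1}"
      by (rule card_mono) (auto simp: K_def)
    moreover have "card K \<le> c" "z \<le> card K"
      using C z by (auto simp: K_def intro!: card_mono)
    ultimately show ?thesis
      unfolding s_def using z by (intro binomial_half_le) auto
  qed
  ultimately show "card Y \<le> 8 * card {y \<in> Y. 2 * m + 2 \<le> DLB n y}" by simp
  then show "Y \<noteq> {}"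
    using \<open>card Y = c choose s\<close> z unfolding s_def by (auto simp: zero_less_binomial_iff)
qed

lemma search_success:
  assumes y: "y \<in> flip_targets n s 0 u w" and success: "2 * m + 2 \<le> DLB n y"
  shows "if s = z then y = fill_block m u else search_inv n m u y s z"
proof -
  define D where "D = diff_pos n y u"
  have D: "D \<subseteq> {2 * m..<n}" "card D = s" "length y = n" "finite D"
    using y search finite_diff_pos by (auto simp: flip_targets_0 search_inv_def D_def bitstrings_def)
  then have "block_zeros m u \<subseteq> D"
    using success DLB_ge_next_block_iff_flipped[OF u _ ev nm prefix] by (auto simp: D_def)
  moreover have z: "z = card (block_zeros m u)" "0 < z"
    using search by (auto simp: search_inv_def)
  ultimately have "z \<le> s" using D card_mono by metis
  show ?thesis
  proof (cases "s = z")
    case True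
    then have "D = block_zeros m u"
      using card_subset_eq[OF D(4) \<open>block_zeros m u \<subseteq> D\<close>] D z by simp
    then have "y = fill_block m u"
      using flip_set_diff_pos[OF D(3) u] flip_set_block_zeros[OF u nm] by (simp add: D_def)
    then show ?thesis using True by simp
  next
    case False
    then show ?thesis
      using D \<open>block_zeros m u \<subseteq> D\<close> z \<open>z \<le> s\<close>
      by (simp add: search_inv_def D_def diff_pos_commute)
  qed
qed

end

lemma step_Search:
  "step n (map f (xs @ [y])) (Search m side ix iy ixd ic c z) =
    (if f y < 2 * m + 2 then Search m side ix iy ixd ic c z
     else if (c + 1) div 2 = z then
       (if side then settle n (map f (xs @ [y])) (m + 1) False ixd (length xs) 0
        else settle n (map f (xs @ [y])) m True ix iy (length xs))
     else Search m side ix iy ixd (length xs) ((c + 1) div 2) z)"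
  by (simp add: step_def)

lemma state_inv_Search_append:
  "state_inv n xs (Search m side ix iy ixd ic c z) \<Longrightarrow> state_inv n (xs @ [y]) (Search m side ix iy ixd ic c z)"
  by (auto simp: state_inv_def nth_append)

context
  fixes n m ix iy ixd ic c z :: nat and side :: bool and xs :: "bool list list"
  assumes ev: "even n" and inv: "state_inv n xs (Search m side ix iy ixd ic c z)"
begin

abbreviation (input) "searched \<equiv> xs ! (if side then iy else ix)"

lemma search_state_facts:
  shows "2 * m + 2 \<le> n" "length searched = n" "\<forall>i < 2 * m. searched ! i"
    and "search_inv n m searched (xs ! ic) c z"
  using inv by (auto simp: state_inv_def complementary_pair_def)

lemma search_round_complete:
  assumes y: "y = fill_block m searched" and last: "(c + 1) div 2 = z"
  defines "\<sigma>' \<equiv> (if side then settle n (map (DLB n) (xs @ [y])) (m + 1) False ixd (length xs) 0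
                 else settle n (map (DLB n) (xs @ [y])) m True ix iy (length xs))"
  shows "state_inv n (xs @ [y]) \<sigma>' \<and> potential n \<sigma>' + 8 \<le> potential n (Search m side ix iy ixd ic c z)"
proof -
  note facts = search_state_facts
  let ?H = "halvings n 1"
  have "halvings c z = 1"
    using facts(4) last halvings_eq_Suc[of c z] by (simp add: search_inv_def halvings_eq_0)
  then have pot: "potential n (Search m side ix iy ixd ic c z) = 8 * ?H * (rounds_left n m side - 1) + 8"
    by (simp add: potential_def algebra_simps)
  have idx: "ix < length xs" "iy < length xs" "side \<longrightarrow> ixd < length xs \<and> xs ! ixd = fill_block m (xs ! ix)"
    and pair: "complementary_pair n m (xs ! ix) (xs ! iy)"
    using inv by (auto simp: state_inv_def)
  show ?thesis
  proof (cases side)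
    case True
    have "state_inv n (xs @ [y]) \<sigma>' \<and> potential n \<sigma>' \<le> 8 * ?H * rounds_left n (m + 1) False"
      unfolding \<sigma>'_def if_P[OF True] using True idx y facts(1) complementary_pair_fill_block[OF pair facts(1)]
      by (intro settle_inv ev) (auto simp: nth_append)
    then show ?thesis using pot True rounds_left_next_round(1)[OF ev facts(1), symmetric] by simp
  next
    case False
    have "state_inv n (xs @ [y]) \<sigma>' \<and> potential n \<sigma>' \<le> 8 * ?H * rounds_left n m True"
      unfolding \<sigma>'_def if_not_P[OF False] using False idx y facts(1) pair
      by (intro settle_inv ev) (auto simp: nth_append)
    then show ?thesis using pot False rounds_left_next_round(2)[OF ev facts(1), symmetric] by simp
  qed
qed

lemma search_step:
  assumes y: "y \<in> flip_targets n ((c + 1) div 2) 0 searched (xs ! ic)"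
  defines "\<sigma>' \<equiv> step n (map (DLB n) (xs @ [y])) (Search m side ix iy ixd ic c z)"
  shows "state_inv n (xs @ [y]) \<sigma>' \<and>
    potential n \<sigma>' + (if 2 * m + 2 \<le> DLB n y then 8 else 0) \<le> potential n (Search m side ix iy ixd ic c z)"
proof (cases "2 * m + 2 \<le> DLB n y")
  case False
  then show ?thesis
    using state_inv_Search_append[OF inv] unfolding \<sigma>'_def step_Search by simp
next
  case success: True
  note facts = search_state_facts
  note result = search_success[OF ev facts(1-4) y success]
  show ?thesis
  proof (cases "(c + 1) div 2 = z")
    case True
    then have y_fill: "y = fill_block m searched"
      using result by simp
    have not_fail: "\<not> DLB n y < 2 * m + 2"
      using success by simp
    show ?thesis
      unfolding \<sigma>'_def step_Search if_not_P[OF not_fail] if_P[OF True] if_P[OF success]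
      by (rule search_round_complete[OF y_fill True])
  next
    case False
    have "halvings c z = Suc (halvings ((c + 1) div 2) z)"
      using facts(4) by (intro halvings_eq_Suc) (auto simp: search_inv_def)
    then show ?thesis
      using False result success inv unfolding \<sigma>'_def step_Search
      by (auto simp: state_inv_def potential_def nth_append)
  qed
qed

end

section \<open>The expected runtime\<close>

definition good_hist :: "nat \<Rightarrow> bool list list \<Rightarrow> bool" where
  "good_hist n xs \<longleftrightarrow> xs \<noteq> [] \<and> (\<forall>x\<in>set xs. length x = n) \<and>
     (replicate n True \<in> set xs \<or> state_inv n xs (state_of n (map (DLB n) xs)))"

definition hist_potential :: "nat \<Rightarrow> bool list list \<Rightarrow> nat" where
  "hist_potential n xs =
     (if replicate n True \<in> set xs then 0 else potential n (state_of n (map (DLB n) xs)))"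

lemma start_step:
  assumes ev: "even n" and x: "length x = n" and unsolved: "x \<noteq> replicate n True"
  shows "next_hist (DLB n) (dlb_alg n) [x] = return_pmf [x, map Not x]"
    and "good_hist n [x, map Not x]"
    and "hist_potential n [x, map Not x] + 1 \<le> hist_potential n [x]"
proof -
  show "next_hist (DLB n) (dlb_alg n) [x] = return_pmf [x, map Not x]"
    using flip_targets_complement[OF x]
    by (simp add: next_hist_def dlb_alg_def action_def flip_op_def pmf_of_set_singleton)
  have "state_of n (map (DLB n) [x, map Not x]) = settle n (map (DLB n) [x, map Not x]) 0 False 0 1 0"
    using state_of_snoc[of "[DLB n x]" n "DLB n (map Not x)"] by (simp add: step_def)
  moreover have "state_inv n [x, map Not x] (settle n (map (DLB n) [x, map Not x]) 0 False 0 1 0) \<and>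
      potential n (settle n (map (DLB n) [x, map Not x]) 0 False 0 1 0) \<le> 8 * halvings n 1 * rounds_left n 0 False"
    using complementary_pair_Not[OF x] by (intro settle_inv ev) auto
  ultimately show "good_hist n [x, map Not x]" "hist_potential n [x, map Not x] + 1 \<le> hist_potential n [x]"
    using x unsolved by (auto simp: good_hist_def hist_potential_def potential_def)
qed

lemma search_step_hist:
  assumes ev: "even n" and good: "good_hist n xs" and unsolved: "replicate n True \<notin> set xs"
    and \<sigma>: "state_of n (map (DLB n) xs) = Search m side ix iy ixd ic c z"
  defines "Y \<equiv> flip_targets n ((c + 1) div 2) 0 (xs ! (if side then iy else ix)) (xs ! ic)"
  shows "next_hist (DLB n) (dlb_alg n) xs = map_pmf (\<lambda>y. xs @ [y]) (pmf_of_set Y)"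
    and "Y \<noteq> {}" "card Y \<le> 8 * card {y \<in> Y. 2 * m + 2 \<le> DLB n y}"
    and "\<And>y. y \<in> Y \<Longrightarrow> good_hist n (xs @ [y]) \<and>
           hist_potential n (xs @ [y]) + (if 2 * m + 2 \<le> DLB n y then 8 else 0) \<le> hist_potential n xs"
proof -
  have inv: "state_inv n xs (Search m side ix iy ixd ic c z)"
    using good unsolved \<sigma> by (simp add: good_hist_def)
  note facts = search_state_facts[OF ev inv]
  show "Y \<noteq> {}" "card Y \<le> 8 * card {y \<in> Y. 2 * m + 2 \<le> DLB n y}"
    unfolding Y_def using search_succeeds_often[OF ev facts] by auto
  moreover have "dlb_alg n (map (DLB n) xs) = (flip_op n ((c + 1) div 2) 0, [if side then iy else ix, ic])"
    using inv \<sigma> by (simp add: dlb_alg_def action_def state_inv_def)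
  ultimately show "next_hist (DLB n) (dlb_alg n) xs = map_pmf (\<lambda>y. xs @ [y]) (pmf_of_set Y)"
    by (simp add: next_hist_def flip_op_def Y_def)
  fix y assume "y \<in> Y"
  then have "length y = n"
    by (simp add: Y_def flip_targets_def bitstrings_def)
  moreover have "state_of n (map (DLB n) (xs @ [y])) = step n (map (DLB n) (xs @ [y])) (Search m side ix iy ixd ic c z)"
    using state_of_snoc[of "map (DLB n) xs" n "DLB n y"] \<sigma> good by (simp add: good_hist_def)
  moreover note search_step[OF ev inv \<open>y \<in> Y\<close>[unfolded Y_def]]
  ultimately show "good_hist n (xs @ [y]) \<and>
      hist_potential n (xs @ [y]) + (if 2 * m + 2 \<le> DLB n y then 8 else 0) \<le> hist_potential n xs"
    using good unsolved \<sigma> by (auto simp: good_hist_def hist_potential_def)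
qed

lemma set_pmf_next_hist_dlb_alg:
  assumes "xs \<noteq> []" "\<forall>x\<in>set xs. length x = n" "zs \<in> set_pmf (next_hist (DLB n) (dlb_alg n) xs)"
  obtains y where "length y = n" "zs = xs @ [y]"
proof -
  let ?h = "map (DLB n) xs"
  have "unbiased_op n 2 (fst (dlb_alg n ?h)) \<and> length (snd (dlb_alg n ?h)) = 2 \<and>
      (\<forall>i\<in>set (snd (dlb_alg n ?h)). i < length ?h)"
    using valid_dlb_alg[of n, unfolded valid_alg_def, rule_format, of ?h] assms(1) by simp
  then have "set_pmf (fst (dlb_alg n ?h) (map ((!) xs) (snd (dlb_alg n ?h)))) \<subseteq> bitstrings n"
    using assms(2) unfolding unbiased_op_def by (auto simp: bitstrings_def subset_code(1))
  then show ?thesis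
    using assms(3) that by (auto simp: next_hist_def bitstrings_def)
qed

lemma good_hist_cases:
  assumes "good_hist n xs"
  obtains (solved) "replicate n True \<in> set xs"
    | (start) x where "xs = [x]" "length x = n" "x \<noteq> replicate n True"
    | (search) m side ix iy ixd ic c z where "replicate n True \<notin> set xs"
        "state_of n (map (DLB n) xs) = Search m side ix iy ixd ic c z"
proof (cases "replicate n True \<in> set xs")
  case False
  then have inv: "state_inv n xs (state_of n (map (DLB n) xs))"
    using assms by (simp add: good_hist_def)
  show ?thesis
  proof (cases "state_of n (map (DLB n) xs)")
    case Start
    then obtain x where "xs = [x]"
      using inv by (auto simp: state_inv_def length_Suc_conv)
    then show ?thesis using False assms start by (simp add: good_hist_def)
  next
    case Finished
    then show ?thesis using inv False by (simp add: state_inv_def)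
  next
    case Search
    then show ?thesis using False search by simp
  qed
qed (rule solved)

lemma indicator_unsolved:
  assumes "even n"
  shows "indicator {xs. \<forall>x\<in>set xs. \<not> is_opt n (DLB n) x} xs =
    (if replicate n True \<in> set xs then 0 else 1 :: ennreal)"
  using is_opt_DLB_iff[OF assms] by (auto simp: indicator_def)

lemma dlb_alg_step:
  assumes ev: "even n" and good: "good_hist n xs"
  shows "(\<forall>zs\<in>set_pmf (next_hist (DLB n) (dlb_alg n) xs). good_hist n zs) \<and>
    (\<integral>\<^sup>+ zs. of_nat (hist_potential n zs) \<partial>measure_pmf (next_hist (DLB n) (dlb_alg n) xs))
      + indicator {xs. \<forall>x\<in>set xs. \<not> is_opt n (DLB n) x} xs \<le> of_nat (hist_potential n xs)"
  using good
proof (cases rule: good_hist_cases)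
  case solved
  have "good_hist n zs \<and> hist_potential n zs = 0"
    if zs: "zs \<in> set_pmf (next_hist (DLB n) (dlb_alg n) xs)" for zs
  proof -
    obtain y where "length y = n" "zs = xs @ [y]"
      using set_pmf_next_hist_dlb_alg[OF _ _ zs] good by (auto simp: good_hist_def)
    then show ?thesis using solved good by (simp add: good_hist_def hist_potential_def)
  qed
  then show ?thesis
    using solved by (simp add: indicator_unsolved[OF ev] nn_integral_0_iff_AE AE_pmfI hist_potential_def)
next
  case (start x)
  have "(of_nat (hist_potential n [x, map Not x]) :: ennreal) + 1 \<le> of_nat (hist_potential n [x])"
    using start_step(3)[OF ev start(2,3)] by (metis of_nat_1 of_nat_add of_nat_le_iff)
  then show ?thesis
    using start_step(1,2)[OF ev start(2,3)] start by (simp add: indicator_unsolved[OF ev])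
next
  case (search m side ix iy ixd ic c z)
  define Y where "Y = flip_targets n ((c + 1) div 2) 0 (xs ! (if side then iy else ix)) (xs ! ic)"
  note hist = search_step_hist[OF ev good search, folded Y_def]
  have fin: "finite Y"
    by (simp add: Y_def finite_flip_targets)
  have "(\<integral>\<^sup>+ y. of_nat (hist_potential n (xs @ [y])) \<partial>measure_pmf (pmf_of_set Y)) + 1
      \<le> (of_nat (hist_potential n xs) :: ennreal)"
    using hist(4) by (intro nn_integral_pmf_of_set_drift[OF fin hist(2) _ hist(3)]) blast
  then show ?thesis
    using hist(1,4) set_pmf_of_set[OF hist(2) fin] search(1)
    by (simp add: nn_integral_map_pmf indicator_unsolved[OF ev])
qed

lemma exp_runtime_dlb_alg:
  assumes ev: "even n"
  shows "exp_runtime n (DLB n) (dlb_alg n) \<le> of_nat (8 * halvings n 1 * n + 2)"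
proof -
  have "exp_runtime n (DLB n) (dlb_alg n) \<le> of_nat (8 * halvings n 1 * n + 1) + 1"
  proof (rule exp_runtime_le_potential)
    fix x :: "bool list" assume "x \<in> bitstrings n"
    moreover have "potential n Start = 8 * halvings n 1 * n + 1"
      using ev by (simp add: potential_def rounds_left_def)
    ultimately show "good_hist n [x] \<and> hist_potential n [x] \<le> 8 * halvings n 1 * n + 1"
      by (simp add: bitstrings_def good_hist_def state_inv_def hist_potential_def)
  qed (use dlb_alg_step[OF ev] in auto)
  then show ?thesis by (simp add: ac_simps)
qed

lemma halvings_bound_le_n_ln_n:
  assumes "4 \<le> n"
  shows "real (8 * halvings n 1 * n + 2) \<le> 33 * real n * ln (real n)"
proof -
  have "1 / 2 \<le> ln (real n)"
    using ln_le_cancel_iff[of "exp (1 / 2)" "real n"] exp_half_le2 assms by simp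
  then have "2 \<le> real n * ln (real n)"
    using assms mult_mono[of 4 "real n" "1 / 2" "ln (real n)"] by simp
  moreover have "real n * real (halvings n 1) \<le> real n * (4 * ln (real n))"
    using halvings_le_ln[of n] assms by (intro mult_left_mono) auto
  ultimately show ?thesis by (simp add: algebra_simps)
qed

theorem theorem18:
  shows "\<exists>C::real. C > 0 \<and> (\<exists>N::nat. \<forall>n::nat. n \<ge> N \<and> even n \<longrightarrow>
           unbiased_bbc 2 n (DLB n) \<le> ennreal (C * real n * ln (real n)))"
proof (intro exI conjI allI impI)
  fix n :: nat
  assume n: "4 \<le> n \<and> even n"
  have "unbiased_bbc 2 n (DLB n) \<le> exp_runtime n (DLB n) (dlb_alg n)"
    unfolding unbiased_bbc_def by (rule INF_lower) (simp add: valid_dlb_alg)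
  also have "\<dots> \<le> of_nat (8 * halvings n 1 * n + 2)"
    using exp_runtime_dlb_alg n by simp
  also have "\<dots> \<le> ennreal (33 * real n * ln (real n))"
    unfolding ennreal_of_nat_eq_real_of_nat using n by (intro ennreal_leI halvings_bound_le_n_ln_n) simp
  finally show "unbiased_bbc 2 n (DLB n) \<le> ennreal (33 * real n * ln (real n))" .
qed simp

end
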